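(* Let $z\in\mathbb{C}^n$ have unit-modulus entries, let $W\in\mathbb{C}^{n\times n}$ be Hermitian and $z$-discordant (i.e., $\|W\|_{\mathrm{op}} \leq 3\sqrt{n}$ and $\|Wz\|_\infty \leq 3\sqrt{n\log n}$), and let $C = zz^* + \sigma W$. Let $x\in\mathbb{C}^n$ satisfy $\|x\|_2^2 = n$ and $z^*Cz \leq x^*Cx$ (e.g., $x$ a global optimizer of $\max x^*Cx$ subject to $|x_1|=\cdots=|x_n|=1$), with global phase chosen so that $z^*x = |z^*x|$. The $\ell_2$ error bound $\|x-z\|_2 \leq 12\sigma$ (obtained by expanding $z^*Cz \leq x^*Cx$, dividing $n^2-|z^*x|^2 \leq \sigma(x^*Wx - z^*Wz)$ by $n+|z^*x| \geq n$, and using $x^*Wx - z^*Wz \leq \|x-z\|_2\|W\|_{\mathrm{op}}\|x+z\|_2$) can be bootstrapped to reduce the constant: assuming $\|x-z\|_2 \leq \alpha\sigma$ and $\sigma \leq t\sqrt{n}$, one obtains $\|x-z\|_2 \leq \alpha_k\sigma$ for all $k$, with $\alpha_0 = 12$ and $\alpha_{k+1} = 6 + (t/2)^2\alpha_k^3$. For $t < 1/(6\sqrt{2})$ small enough, $\alpha_k$ converges arbitrarily close to $6$. For example, if $\sigma \leq \sqrt{n}/12$, then $\|x-z\|_2 \leq 6.5\sigma$.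
   Context: Angular synchronization: measurements $C = zz^*+\sigma W$ of relative phases; the maximum likelihood estimator solves $\max_{x} x^*Cx$ subject to $|x_i|=1$ for all $i$. The basic bound $\|x-z\|_2\leq 12\sigma$ is pessimistic because it uses $n+|z^*x|\geq n$ although $n+|z^*x|$ is closer to $2n$. *)

theory Defs
  imports "HOL-Analysis.Analysis"
begin

text \<open>Vectors in C^n are modelled as complex^'n, matrices as complex^'n^'n.
  The norm on complex^'n is the Euclidean (l2) norm.\<close>

definition cdot :: "complex^'n \<Rightarrow> complex^'n \<Rightarrow> complex" where
  "cdot u v = (\<Sum>i\<in>UNIV. cnj (u$i) * v$i)"

definition qform :: "complex^'n^'n \<Rightarrow> complex^'n \<Rightarrow> complex" where
  "qform A v = cdot v (A *v v)"

definition hermitian_mat :: "complex^'n^'n \<Rightarrow> bool" where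
  "hermitian_mat A \<longleftrightarrow> (\<forall>i j. A$i$j = cnj (A$j$i))"

definition op_norm :: "complex^'n^'n \<Rightarrow> real" where
  "op_norm A = onorm (\<lambda>v. A *v v)"

definition sup_norm :: "complex^'n \<Rightarrow> real" where
  "sup_norm v = Max (range (\<lambda>i. cmod (v$i)))"

definition outer :: "complex^'n \<Rightarrow> complex^'n \<Rightarrow> complex^'n^'n" where
  "outer u v = (\<chi> i j. u$i * cnj (v$j))"

definition discordant :: "complex^'n \<Rightarrow> complex^'n^'n \<Rightarrow> bool" where
  "discordant z W \<longleftrightarrow>
     op_norm W \<le> 3 * sqrt (real CARD('n)) \<and>
     sup_norm (W *v z) \<le> 3 * sqrt (real CARD('n) * ln (real CARD('n)))"

fun alpha_seq :: "real \<Rightarrow> nat \<Rightarrow> real" where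
  "alpha_seq t 0 = 12"
| "alpha_seq t (Suc k) = 6 + (t/2)^2 * (alpha_seq t k)^3"

end

theory Submission
  imports Defs
begin

text \<open>Write \<open>d = \<parallel>x - z\<parallel>\<close> and \<open>p = z\<^sup>*x \<ge> 0\<close>, so that \<open>d\<^sup>2 = 2n - 2p\<close>. Expanding
  \<open>z\<^sup>*Cz \<le> x\<^sup>*Cx\<close> and bounding the noise term by Cauchy-Schwarz gives
  \<open>n\<^sup>2 - p\<^sup>2 \<le> 6\<sigma>nd\<close>. Since \<open>n\<^sup>2 - p\<^sup>2 = (d\<^sup>2/2)(2n - d\<^sup>2/2)\<close>, this is the cubic inequality
  \<open>dn - d\<^sup>3/4 \<le> 6\<sigma>n\<close>. Using \<open>d\<^sup>2 \<le> 2n\<close> crudely yields \<open>d \<le> 12\<sigma>\<close>; instead, feeding a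
  known bound \<open>d \<le> \<alpha>\<sigma>\<close> and \<open>\<sigma>\<^sup>2 \<le> t\<^sup>2n\<close> into the cubic term yields
  \<open>d \<le> (6 + (t/2)\<^sup>2\<alpha>\<^sup>3)\<sigma>\<close>, which is the recursion defining \<open>alpha_seq\<close>.\<close>

lemma inner_eq_Re_cdot: "inner u v = Re (cdot u v)"
  by (simp add: inner_vec_def cdot_def inner_complex_def)

lemma cdot_self: "cdot v v = of_real ((norm v)^2)"
proof -
  have "Re (cdot v v) = (norm v)^2"
    by (simp add: power2_norm_eq_inner inner_eq_Re_cdot)
  moreover have "Im (cdot v v) = 0" by (simp add: cdot_def Im_sum)
  ultimately show ?thesis by (simp add: complex_eq_iff)
qed

lemma norm_unit_modulus:
  fixes z :: "complex^'n"
  assumes "\<forall>i. cmod (z$i) = 1"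
  shows "(norm z)^2 = real CARD('n)"
  using assms by (simp add: norm_vec_def L2_set_def)

lemma qform_outer_self: "qform (outer z z) v = of_real ((cmod (cdot z v))^2)"
proof -
  have Mv: "outer z z *v v = (\<chi> i. z$i * cdot z v)"
    by (simp add: vec_eq_iff matrix_vector_mult_def outer_def cdot_def sum_distrib_left mult_ac)
  have "qform (outer z z) v = (\<Sum>i\<in>UNIV. cnj (v$i) * z$i) * cdot z v"
    unfolding qform_def Mv cdot_def[of v] by (simp add: sum_distrib_left sum_distrib_right mult_ac)
  also have "(\<Sum>i\<in>UNIV. cnj (v$i) * z$i) = cnj (cdot z v)"
    by (simp add: cdot_def mult_ac)
  finally show ?thesis by (metis complex_norm_square mult.commute of_real_power)
qed

lemma qform_add_scaleR: "qform (A + r *\<^sub>R B) v = qform A v + of_real r * qform B v"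
proof -
  have "(A + r *\<^sub>R B) *v v = A *v v + r *\<^sub>R (B *v v)"
    by (simp add: vec_eq_iff matrix_vector_mult_def scaleR_sum_right distrib_right sum.distrib)
  thus ?thesis
    by (simp add: qform_def cdot_def sum.distrib distrib_left sum_distrib_left
        scaleR_conv_of_real[where 'a=complex] mult_ac)
qed

lemma hermitian_cdot_swap:
  assumes "hermitian_mat W"
  shows "cdot x (W *v z) = cnj (cdot z (W *v x))"
proof -
  have "cdot x (W *v z) = (\<Sum>i\<in>UNIV. \<Sum>j\<in>UNIV. cnj (x$i) * W$i$j * z$j)"
    by (simp add: cdot_def matrix_vector_mult_def sum_distrib_left mult_ac)
  also have "\<dots> = (\<Sum>j\<in>UNIV. \<Sum>i\<in>UNIV. cnj (x$i) * W$i$j * z$j)" by (rule sum.swap)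
  also have "\<dots> = (\<Sum>j\<in>UNIV. \<Sum>i\<in>UNIV. cnj (cnj (z$j) * W$j$i * x$i))"
  proof (intro sum.cong refl)
    fix j i
    have "W$i$j = cnj (W$j$i)" using assms unfolding hermitian_mat_def by blast
    thus "cnj (x$i) * W$i$j * z$j = cnj (cnj (z$j) * W$j$i * x$i)" by (simp add: mult_ac)
  qed
  also have "\<dots> = cnj (cdot z (W *v x))"
    by (simp add: cnj_sum cdot_def matrix_vector_mult_def sum_distrib_left mult_ac)
  finally show ?thesis .
qed

lemma hermitian_qform_diff:
  assumes "hermitian_mat W"
  shows "Re (qform W x) - Re (qform W z) = inner (x - z) (W *v (x + z))"
proof -
  have "inner x (W *v z) = inner z (W *v x)"
    using hermitian_cdot_swap[OF assms, of x z] by (simp add: inner_eq_Re_cdot)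
  thus ?thesis
    by (simp add: qform_def inner_eq_Re_cdot[symmetric] matrix_vector_right_distrib
        inner_diff_left inner_add_right)
qed

lemma hermitian_qform_diff_le:
  assumes "hermitian_mat W"
  shows "Re (qform W x) - Re (qform W z) \<le> norm (x - z) * (op_norm W * norm (x + z))"
proof -
  have "Re (qform W x) - Re (qform W z) \<le> norm (x - z) * norm (W *v (x + z))"
    unfolding hermitian_qform_diff[OF assms] by (rule norm_cauchy_schwarz)
  also have "norm (W *v (x + z)) \<le> op_norm W * norm (x + z)"
    unfolding op_norm_def by (rule onorm) simp
  finally show ?thesis by (simp add: mult_left_mono)
qed

lemma cost_gap_le_noise_gap:
  assumes "(norm z)^2 = n"
    and "Re (qform (outer z z + \<sigma> *\<^sub>R W) z) \<le> Re (qform (outer z z + \<sigma> *\<^sub>R W) x)"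
  shows "n^2 - (cmod (cdot z x))^2 \<le> \<sigma> * (Re (qform W x) - Re (qform W z))"
proof -
  have "cmod (cdot z z) = n"
    using assms(1) by (metis cdot_self norm_of_real zero_le_power2 abs_of_nonneg)
  thus ?thesis
    using assms(2) by (simp add: qform_add_scaleR qform_outer_self algebra_simps)
qed

lemma norm_diff_sq_aligned:
  assumes "(norm z)^2 = n" "(norm x)^2 = n"
    and "cdot z x = complex_of_real (cmod (cdot z x))"
  shows "(norm (x - z))^2 = 2 * n - 2 * cmod (cdot z x)"
proof -
  have "inner z x = Re (complex_of_real (cmod (cdot z x)))"
    unfolding inner_eq_Re_cdot using assms(3) by (rule arg_cong)
  thus ?thesis
    using assms(1,2)
    by (simp add: power2_norm_eq_inner inner_diff_left inner_diff_right inner_commute)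
qed

lemma ml_error_cubic_inequality:
  fixes z x :: "complex^'n" and W :: "complex^'n^'n"
  defines "n \<equiv> real CARD('n)"
  assumes unit: "\<forall>i. cmod (z$i) = 1"
    and herm: "hermitian_mat W"
    and opW: "op_norm W \<le> 3 * sqrt n"
    and sig: "\<sigma> \<ge> 0"
    and xnorm: "(norm x)^2 = n"
    and opt: "Re (qform (outer z z + \<sigma> *\<^sub>R W) z) \<le> Re (qform (outer z z + \<sigma> *\<^sub>R W) x)"
    and phase: "cdot z x = complex_of_real (cmod (cdot z x))"
  shows "norm (x - z) * n - (norm (x - z))^3 / 4 \<le> 6 * \<sigma> * n"
proof -
  define d where "d = norm (x - z)"
  define p where "p = cmod (cdot z x)"
  have npos: "n > 0" by (simp add: n_def)
  have znorm: "(norm z)^2 = n" using norm_unit_modulus[OF unit] by (simp add: n_def)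
  have d_sq: "d^2 = 2 * n - 2 * p"
    using norm_diff_sq_aligned[OF znorm xnorm phase] by (simp add: d_def p_def)
  have "norm x = sqrt n" "norm z = sqrt n"
    using xnorm znorm by (metis norm_ge_zero real_sqrt_unique)+
  hence "norm (x + z) \<le> 2 * sqrt n"
    using norm_triangle_ineq[of x z] by simp
  hence "op_norm W * norm (x + z) \<le> 3 * sqrt n * (2 * sqrt n)"
    using opW npos by (intro mult_mono) (auto simp: op_norm_def onorm_pos_le)
  hence W_bound: "op_norm W * norm (x + z) \<le> 6 * n"
    using npos by simp
  have p_eq: "p = n - d^2 / 2" using d_sq by linarith
  have "d * (d * n - d^3 / 4) = n^2 - p^2"
    unfolding p_eq by (simp add: power2_eq_square power3_eq_cube algebra_simps)
  also have "\<dots> \<le> \<sigma> * (d * (op_norm W * norm (x + z)))"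
    using cost_gap_le_noise_gap[OF znorm opt] hermitian_qform_diff_le[OF herm, of x z] sig
    unfolding d_def p_def by (meson mult_left_mono order_trans)
  also have "\<dots> \<le> \<sigma> * (d * (6 * n))"
    using W_bound sig by (simp add: d_def mult_left_mono)
  finally have "d * (d * n - d^3 / 4) \<le> d * (6 * \<sigma> * n)"
    by (simp add: mult_ac)
  moreover have "d \<ge> 0" by (simp add: d_def)
  ultimately have "d * n - d^3 / 4 \<le> 6 * \<sigma> * n"
    using sig npos by (cases "d = 0") simp_all
  thus ?thesis by (simp add: d_def)
qed

lemma error_le_twelve_sigma:
  fixes n d \<sigma> :: real
  assumes "n > 0" "d \<ge> 0" "d^2 \<le> 2 * n" "d * n - d^3 / 4 \<le> 6 * \<sigma> * n"
  shows "d \<le> 12 * \<sigma>"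
proof -
  have "d^3 / 4 \<le> d * n / 2"
    using mult_left_mono[OF assms(3) assms(2)] by (simp add: power2_eq_square power3_eq_cube)
  hence "d * n \<le> 12 * \<sigma> * n" using assms(4) by linarith
  thus ?thesis using assms(1) by simp
qed

lemma error_bootstrap_step:
  fixes n d \<sigma> t a :: real
  assumes n: "n > 0" and d: "d \<ge> 0" and sig: "\<sigma> \<ge> 0" and a: "a \<ge> 0"
    and t: "\<sigma> \<le> t * sqrt n" "t \<ge> 0"
    and cubic: "d * n - d^3 / 4 \<le> 6 * \<sigma> * n"
    and prior: "d \<le> a * \<sigma>"
  shows "d \<le> (6 + (t/2)^2 * a^3) * \<sigma>"
proof -
  have "\<sigma>^2 \<le> (t * sqrt n)^2" using t sig by (intro power_mono) auto
  hence sig_sq: "\<sigma>^2 \<le> t^2 * n" using n by (simp add: power_mult_distrib)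
  have "d^3 \<le> a^3 * \<sigma> * \<sigma>^2"
    using power_mono[OF prior d, of 3]
    by (simp add: power_mult_distrib power2_eq_square power3_eq_cube mult_ac)
  also have "\<dots> \<le> a^3 * \<sigma> * (t^2 * n)"
    using sig_sq a sig by (intro mult_left_mono) auto
  finally have "d^3 / (4 * n) \<le> (t/2)^2 * a^3 * \<sigma>"
    using n by (simp add: divide_le_eq power_divide algebra_simps)
  moreover have "d \<le> 6 * \<sigma> + d^3 / (4 * n)"
    using cubic n by (simp add: field_simps)
  ultimately show ?thesis by (simp add: algebra_simps)
qed

lemma alpha_seq_nonneg: "t \<ge> 0 \<Longrightarrow> alpha_seq t k \<ge> 0"
  by (induction k) auto

lemma error_le_alpha_seq:
  fixes n d \<sigma> t :: real
  assumes "n > 0" "d \<ge> 0" "\<sigma> \<ge> 0" "\<sigma> \<le> t * sqrt n" "t \<ge> 0" "d^2 \<le> 2 * n"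
    and "d * n - d^3 / 4 \<le> 6 * \<sigma> * n"
  shows "d \<le> alpha_seq t k * \<sigma>"
proof (induction k)
  case 0
  show ?case using error_le_twelve_sigma assms by simp
next
  case (Suc k)
  show ?case
    using error_bootstrap_step[OF assms(1-3) alpha_seq_nonneg[OF assms(5)] assms(4,5,7) Suc]
    by simp
qed

lemma alpha_seq_Suc_le:
  assumes "alpha_seq t k \<le> b" "t \<ge> 0"
  shows "alpha_seq t (Suc k) \<le> 6 + (t/2)^2 * b^3"
  using assms alpha_seq_nonneg by (simp add: mult_left_mono power_mono)

lemma alpha_seq_one_twelfth: "alpha_seq (1/12) 5 \<le> 6.5"
proof -
  have "alpha_seq (1/12) 1 \<le> 9" by (simp add: numeral_eq_Suc)
  from alpha_seq_Suc_le[OF this] have "alpha_seq (1/12) 2 \<le> 7.27" by (simp add: numeral_eq_Suc)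
  from alpha_seq_Suc_le[OF this] have "alpha_seq (1/12) 3 \<le> 6.67" by (simp add: numeral_eq_Suc)
  from alpha_seq_Suc_le[OF this] have "alpha_seq (1/12) 4 \<le> 6.52" by (simp add: numeral_eq_Suc)
  from alpha_seq_Suc_le[OF this] show ?thesis by (simp add: numeral_eq_Suc)
qed

lemma alpha_seq_near_six:
  assumes "\<epsilon> > 0"
  shows "\<exists>t0>0. \<forall>t. 0 \<le> t \<and> t < t0 \<longrightarrow> (\<exists>k. alpha_seq t k \<le> 6 + \<epsilon>)"
proof (intro exI[of _ "sqrt (\<epsilon> / 432)"] conjI allI impI)
  show "sqrt (\<epsilon> / 432) > 0" using assms by simp
  fix t assume "0 \<le> t \<and> t < sqrt (\<epsilon> / 432)"
  hence "t^2 \<le> (sqrt (\<epsilon> / 432))^2" by (intro power_mono) auto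
  hence "alpha_seq t 1 \<le> 6 + \<epsilon>" using assms by (simp add: power_divide)
  thus "\<exists>k. alpha_seq t k \<le> 6 + \<epsilon>" by blast
qed

theorem mainTheorem8:
  fixes z x :: "complex^'n" and W :: "complex^'n^'n" and \<sigma> :: real
  assumes unit: "\<forall>i. cmod (z$i) = 1"
    and herm: "hermitian_mat W"
    and disc: "discordant z W"
    and sig: "\<sigma> \<ge> 0"
    and xnorm: "(norm x)^2 = real CARD('n)"
    and opt: "Re (qform (outer z z + \<sigma> *\<^sub>R W) z) \<le> Re (qform (outer z z + \<sigma> *\<^sub>R W) x)"
    and phase: "cdot z x = complex_of_real (cmod (cdot z x))"
  shows "(\<forall>t k. 0 \<le> t \<longrightarrow> \<sigma> \<le> t * sqrt (real CARD('n)) \<longrightarrow>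
              norm (x - z) \<le> alpha_seq t k * \<sigma>)
       \<and> (\<forall>\<epsilon>>0. \<exists>t0>0. \<forall>t. 0 \<le> t \<and> t < t0 \<longrightarrow> (\<exists>k. alpha_seq t k \<le> 6 + \<epsilon>))
       \<and> (\<sigma> \<le> sqrt (real CARD('n)) / 12 \<longrightarrow> norm (x - z) \<le> 6.5 * \<sigma>)"
proof -
  have opW: "op_norm W \<le> 3 * sqrt (real CARD('n))"
    using disc by (simp add: discordant_def)
  note cubic = ml_error_cubic_inequality[OF unit herm opW sig xnorm opt phase]
  have "(norm (x - z))^2 \<le> 2 * real CARD('n)"
    using norm_diff_sq_aligned[OF norm_unit_modulus[OF unit] xnorm phase] by simp
  hence bootstrap: "\<forall>t k. 0 \<le> t \<longrightarrow> \<sigma> \<le> t * sqrt (real CARD('n)) \<longrightarrow>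
              norm (x - z) \<le> alpha_seq t k * \<sigma>"
    using error_le_alpha_seq[OF zero_less_card_finite[THEN of_nat_0_less_iff[THEN iffD2]]
        norm_ge_zero sig _ _ _ cubic] by blast
  moreover have "\<sigma> \<le> sqrt (real CARD('n)) / 12 \<longrightarrow> norm (x - z) \<le> 6.5 * \<sigma>"
    using bootstrap[rule_format, of "1/12" 5] mult_right_mono[OF alpha_seq_one_twelfth sig]
    by auto
  ultimately show ?thesis using alpha_seq_near_six by blast
qed

end
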